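(* For every $\varepsilon>0$ there exist $C>0$ and $\varepsilon'>0$ such that for all integers $n,m\ge1$, $$\#\mathcal F^{n,m}(\varepsilon)\le C\,2^{\varepsilon' n};$$ moreover $\varepsilon'$ can be chosen so that $\varepsilon'\to0$ as $\varepsilon\to0$.
   Context: For $\varepsilon>0$ and $k\ge1$, $\mathcal F_k(\varepsilon)$ is the set of pairs of sequences of positive integers $(i_1i_2\cdots i_k;\,j_1j_2\cdots j_k)$ with $i_1<\dots<i_k$ such that: (i) $i_{l+1}-i_l\ge j_l$ for each $1\le l<k$; (ii) $k\le\varepsilon i_k$; (iii) $i_k-\sum_{1\le l<k}j_l\le\varepsilon i_k$. $\mathcal F_k^{n,m}(\varepsilon)$ is the set of elements of $\mathcal F_k(\varepsilon)$ with $i_k=n$ and $j_k=m$, and $\mathcal F^{n,m}(\varepsilon)=\bigcup_{k=1}^n\mathcal F_k^{n,m}(\varepsilon)$. *)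

theory Defs
  imports Complex_Main
begin

text \<open>Sequences (i_1 ... i_k) and (j_1 ... j_k) are represented as lists of length k,
  indexed from 0, so i_l is \<open>is ! (l-1)\<close>.\<close>

definition famF :: "real \<Rightarrow> nat \<Rightarrow> (nat list \<times> nat list) set" where
  "famF eps k = {(is, js). k \<ge> 1 \<and> length is = k \<and> length js = k
     \<and> (\<forall>x\<in>set is. x > 0) \<and> (\<forall>x\<in>set js. x > 0)
     \<and> sorted_wrt (<) is
     \<and> (\<forall>l. l + 1 < k \<longrightarrow> is ! l + js ! l \<le> is ! (l + 1))
     \<and> real k \<le> eps * real (is ! (k - 1))
     \<and> real (is ! (k - 1)) - (\<Sum>l<k - 1. real (js ! l)) \<le> eps * real (is ! (k - 1))}"

definition famFk_nm :: "real \<Rightarrow> nat \<Rightarrow> nat \<Rightarrow> nat \<Rightarrow> (nat list \<times> nat list) set" where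
  "famFk_nm eps k n m = {(is, js) \<in> famF eps k. is ! (k - 1) = n \<and> js ! (k - 1) = m}"

definition famF_nm :: "real \<Rightarrow> nat \<Rightarrow> nat \<Rightarrow> (nat list \<times> nat list) set" where
  "famF_nm eps n m = (\<Union>k\<in>{1..n}. famFk_nm eps k n m)"

end

theory Submission
  imports Defs "HOL-Real_Asymp.Real_Asymp"
begin

(* A member of F^{n,m} is a chain of intervals [i_l, i_l + j_l) with i_l + j_l \<le> i_(l+1) and
   i_k = n. Since both the left ends i_l and the right ends i_l + j_l strictly increase, the chain
   is recovered from the two sets {i_l : l < k} and {i_l + j_l : l < k}, which are subsets of
   {0..n} with fewer than k \<le> \<epsilon> n elements. For 0 < x \<le> 1, Rankin's trick bounds the number of
   subsets of size at most b of an N-element set by (1 + x)^N / x^b; taking x = min \<epsilon> 1 gives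
   the exponent 2 (log(1 + x) - \<epsilon> log x), which tends to 0 with \<epsilon>. *)

lemma sum_Pow_power_card:
  fixes x :: "'a :: comm_semiring_1"
  assumes "finite A"
  shows "(\<Sum>S\<in>Pow A. x ^ card S) = (x + 1) ^ card A"
  using prod_add[OF assms, of "\<lambda>_. x" "\<lambda>_. 1"] by simp

lemma card_small_subsets_mult_powr_le:
  fixes x b :: real
  assumes "finite A" "0 < x" "x \<le> 1"
  shows "real (card {S. S \<subseteq> A \<and> real (card S) \<le> b}) * x powr b \<le> (1 + x) ^ card A"
proof -
  let ?Small = "{S. S \<subseteq> A \<and> real (card S) \<le> b}"
  have "real (card ?Small) * x powr b = (\<Sum>S\<in>?Small. x powr b)"
    by simp
  also have "\<dots> \<le> (\<Sum>S\<in>?Small. x ^ card S)"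
  proof (rule sum_mono)
    fix S assume "S \<in> ?Small"
    then have "x powr b \<le> x powr real (card S)"
      using assms by (simp add: powr_mono')
    then show "x powr b \<le> x ^ card S"
      using assms by (simp add: powr_realpow)
  qed
  also have "\<dots> \<le> (\<Sum>S\<in>Pow A. x ^ card S)"
    using assms by (intro sum_mono2) auto
  also have "\<dots> = (1 + x) ^ card A"
    using sum_Pow_power_card[OF assms(1), of x] by (simp add: add.commute)
  finally show ?thesis .
qed

definition subset_count_exponent :: "real \<Rightarrow> real" where
  "subset_count_exponent eps = log 2 (1 + min eps 1) - eps * log 2 (min eps 1)"

lemma subset_count_exponent_pos: "eps > 0 \<Longrightarrow> subset_count_exponent eps > 0"
proof -
  assume "eps > 0"
  then have "log 2 (1 + min eps 1) > 0" "eps * log 2 (min eps 1) \<le> 0"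
    by (auto intro: mult_nonneg_nonpos)
  then show ?thesis
    unfolding subset_count_exponent_def by linarith
qed

lemma subset_count_exponent_tendsto_0: "(subset_count_exponent \<longlongrightarrow> 0) (at_right 0)"
proof -
  have "((\<lambda>eps::real. log 2 (1 + eps) - eps * log 2 eps) \<longlongrightarrow> 0) (at_right 0)"
    by real_asymp
  moreover have "eventually (\<lambda>eps. log 2 (1 + eps) - eps * log 2 eps = subset_count_exponent eps)
      (at_right 0)"
    unfolding eventually_at_right_field subset_count_exponent_def by (intro exI[of _ 1]) auto
  ultimately show ?thesis
    by (rule Lim_transform_eventually)
qed

lemma two_powr_log_mult: "a > 0 \<Longrightarrow> 2 powr (log 2 a * t) = a powr t"
  by (simp add: powr_powr [symmetric])

lemma card_small_subsets_atLeastAtMost_le: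
  assumes "eps > 0"
  shows "real (card {S. S \<subseteq> {0..n} \<and> real (card S) \<le> eps * real n})
           \<le> 2 * 2 powr (subset_count_exponent eps * real n)"
proof -
  define x where "x = min eps 1"
  have x: "0 < x" "x \<le> 1"
    using assms by (auto simp: x_def)
  have "real (card {S. S \<subseteq> {0..n} \<and> real (card S) \<le> eps * real n}) * x powr (eps * real n)
          \<le> (1 + x) ^ Suc n"
    using card_small_subsets_mult_powr_le[of "{0..n}" x] x by simp
  also have "\<dots> \<le> 2 * (1 + x) powr real n"
    using x by (simp add: powr_realpow)
  finally have "real (card {S. S \<subseteq> {0..n} \<and> real (card S) \<le> eps * real n})
      \<le> 2 * (1 + x) powr real n / x powr (eps * real n)"
    using x by (simp add: pos_le_divide_eq)
  also have "\<dots> = 2 * 2 powr (subset_count_exponent eps * real n)"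
  proof -
    have "subset_count_exponent eps * real n = log 2 (1 + x) * real n - log 2 x * (eps * real n)"
      by (simp add: subset_count_exponent_def x_def algebra_simps)
    then show ?thesis
      using x by (simp add: powr_diff two_powr_log_mult)
  qed
  finally show ?thesis .
qed

definition interval_chains :: "nat \<Rightarrow> nat \<Rightarrow> (nat list \<times> nat list) set" where
  "interval_chains n m = {(xs, ys). xs \<noteq> [] \<and> length ys = length xs \<and> sorted_wrt (<) xs
     \<and> (\<forall>y\<in>set ys. 0 < y) \<and> (\<forall>l. Suc l < length xs \<longrightarrow> xs ! l + ys ! l \<le> xs ! Suc l)
     \<and> last xs = n \<and> last ys = m}"

definition interval_ends :: "nat list \<times> nat list \<Rightarrow> nat set \<times> nat set" where
  "interval_ends p = (set (butlast (fst p)), set (butlast (map2 (+) (fst p) (snd p))))"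

lemma famF_nm_subset_interval_chains:
  "famF_nm eps n m \<subseteq> {p \<in> interval_chains n m. real (length (fst p)) \<le> eps * real n}"
  by (auto simp: famF_nm_def famFk_nm_def famF_def interval_chains_def last_conv_nth
      simp flip: length_greater_0_conv)

lemma strict_sorted_eq_if_butlast_set_eq:
  fixes xs ys :: "'a :: linorder list"
  assumes "sorted_wrt (<) xs" "sorted_wrt (<) ys" "xs \<noteq> []" "ys \<noteq> []"
    and "set (butlast xs) = set (butlast ys)" "last xs = last ys"
  shows "xs = ys"
proof -
  have "sorted_wrt (<) (butlast xs)" "sorted_wrt (<) (butlast ys)"
    using assms(1,2) by (simp_all add: butlast_conv_take)
  then have "butlast xs = butlast ys"
    using assms(5) by (intro sorted_distinct_set_unique) (auto simp: strict_sorted_iff)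
  then show ?thesis
    using assms(3,4,6) by (metis append_butlast_last_id)
qed

lemma map2_plus_left_cancel:
  fixes xs ys zs :: "'a :: cancel_semigroup_add list"
  assumes "length ys = length xs" "length zs = length xs" "map2 (+) xs ys = map2 (+) xs zs"
  shows "ys = zs"
  using assms by (induction xs arbitrary: ys zs) (auto simp: length_Suc_conv)

lemma last_map2_plus:
  "xs \<noteq> [] \<Longrightarrow> length ys = length xs \<Longrightarrow> last (map2 (+) xs ys) = last xs + last ys"
  by (cases xs rule: rev_cases; cases ys rule: rev_cases) simp_all

lemma interval_chains_sorted_right_ends:
  assumes "(xs, ys) \<in> interval_chains n m"
  shows "sorted_wrt (<) (map2 (+) xs ys)"
proof -
  have "xs ! l + ys ! l < xs ! Suc l + ys ! Suc l" if "Suc l < length xs" for l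
  proof -
    have "xs ! l + ys ! l \<le> xs ! Suc l" "0 < ys ! Suc l"
      using assms that by (auto simp: interval_chains_def)
    then show ?thesis by linarith
  qed
  then show ?thesis
    using assms by (auto simp: interval_chains_def sorted_wrt_iff_nth_Suc_transp)
qed

lemma inj_on_interval_ends: "inj_on interval_ends (interval_chains n m)"
proof (rule inj_onI)
  fix p q assume p: "p \<in> interval_chains n m" and q: "q \<in> interval_chains n m"
    and ends: "interval_ends p = interval_ends q"
  obtain xs ys xs' ys' where pq: "p = (xs, ys)" "q = (xs', ys')"
    by (cases p, cases q)
  have chains: "(xs, ys) \<in> interval_chains n m" "(xs', ys') \<in> interval_chains n m"
    using p q pq by simp_all
  then have "xs = xs'"
    using ends pq by (intro strict_sorted_eq_if_butlast_set_eq) (auto simp: interval_chains_def interval_ends_def)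
  moreover have "map2 (+) xs ys = map2 (+) xs' ys'"
    using chains ends pq
    by (intro strict_sorted_eq_if_butlast_set_eq interval_chains_sorted_right_ends)
      (auto simp: interval_chains_def interval_ends_def last_map2_plus)
  ultimately have "ys = ys'"
    using chains by (intro map2_plus_left_cancel[of ys xs ys']) (auto simp: interval_chains_def)
  with \<open>xs = xs'\<close> pq show "p = q" by simp
qed

lemma interval_chains_le_last:
  assumes "(xs, ys) \<in> interval_chains n m" "x \<in> set xs"
  shows "x \<le> n"
proof -
  obtain as where "xs = as @ [n]"
    using assms(1) by (cases xs rule: rev_cases) (auto simp: interval_chains_def)
  then show ?thesis
    using assms by (auto simp: interval_chains_def sorted_wrt_append less_imp_le)
qed

lemma interval_ends_mem_small_subsets:
  assumes "(xs, ys) \<in> interval_chains n m" "real (length xs) \<le> b"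
  defines "Small \<equiv> {S. S \<subseteq> {0..n} \<and> real (card S) \<le> b}"
  shows "interval_ends (xs, ys) \<in> Small \<times> Small"
proof -
  have left: "set (butlast xs) \<subseteq> {0..n}"
    using assms(1) in_set_butlastD interval_chains_le_last by fastforce
  have "y \<le> n" if y: "y \<in> set (butlast (map2 (+) xs ys))" for y
  proof -
    obtain l where "l < length (butlast (map2 (+) xs ys))" "y = butlast (map2 (+) xs ys) ! l"
      using y by (auto simp: in_set_conv_nth)
    then have l: "Suc l < length xs" "y = xs ! l + ys ! l"
      using assms(1) by (auto simp: nth_butlast interval_chains_def)
    then have "y \<le> xs ! Suc l"
      using assms(1) by (simp add: interval_chains_def)
    also have "\<dots> \<le> n"
      using l assms(1) by (intro interval_chains_le_last) auto
    finally show ?thesis .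
  qed
  moreover have "card (set (butlast xs)) \<le> length xs"
    "card (set (butlast (map2 (+) xs ys))) \<le> length xs"
    by (auto intro: order_trans[OF card_length])
  ultimately show ?thesis
    using left assms(2) by (auto simp: Small_def interval_ends_def intro: order_trans[rotated])
qed

lemma card_famF_nm_le_square:
  "real (card (famF_nm eps n m))
     \<le> real (card {S. S \<subseteq> {0..n} \<and> real (card S) \<le> eps * real n}) ^ 2"
proof -
  let ?Small = "{S. S \<subseteq> {0..n} \<and> real (card S) \<le> eps * real n}"
  have "finite ?Small"
    by (rule finite_subset[of _ "Pow {0..n}"]) auto
  moreover have "inj_on interval_ends (famF_nm eps n m)"
    using famF_nm_subset_interval_chains by (blast intro: inj_on_subset[OF inj_on_interval_ends])
  moreover have "interval_ends ` famF_nm eps n m \<subseteq> ?Small \<times> ?Small"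
    using famF_nm_subset_interval_chains interval_ends_mem_small_subsets by fastforce
  ultimately have "card (famF_nm eps n m) \<le> card (?Small \<times> ?Small)"
    by (intro card_inj_on_le) auto
  then show ?thesis
    by (simp add: card_cartesian_product power2_eq_square flip: of_nat_mult)
qed

lemma card_famF_nm_le:
  assumes "eps > 0"
  shows "real (card (famF_nm eps n m)) \<le> 4 * 2 powr (2 * subset_count_exponent eps * real n)"
proof -
  have "real (card (famF_nm eps n m))
      \<le> real (card {S. S \<subseteq> {0..n} \<and> real (card S) \<le> eps * real n}) ^ 2"
    by (rule card_famF_nm_le_square)
  also have "\<dots> \<le> (2 * 2 powr (subset_count_exponent eps * real n)) ^ 2"
    by (rule power_mono[OF card_small_subsets_atLeastAtMost_le[OF assms]]) simp
  also have "\<dots> = 4 * 2 powr (2 * subset_count_exponent eps * real n)"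
    by (simp add: power_mult_distrib powr_realpow [symmetric] powr_powr mult.commute mult.left_commute)
  finally show ?thesis .
qed

theorem lemma4p5:
  "\<exists>g :: real \<Rightarrow> real. (g \<longlongrightarrow> 0) (at_right 0) \<and>
     (\<forall>eps > 0. g eps > 0 \<and>
        (\<exists>C > 0. \<forall>n m :: nat. n \<ge> 1 \<longrightarrow> m \<ge> 1 \<longrightarrow>
           real (card (famF_nm eps n m)) \<le> C * 2 powr (g eps * real n)))"
proof (rule exI[of _ "\<lambda>eps. 2 * subset_count_exponent eps"], intro conjI allI impI)
  show "((\<lambda>eps. 2 * subset_count_exponent eps) \<longlongrightarrow> 0) (at_right 0)"
    using tendsto_mult_right_zero[OF subset_count_exponent_tendsto_0] .
  fix eps :: real
  assume "eps > 0"
  then show "2 * subset_count_exponent eps > 0"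
    by (simp add: subset_count_exponent_pos)
  show "\<exists>C > 0. \<forall>n m :: nat. n \<ge> 1 \<longrightarrow> m \<ge> 1 \<longrightarrow>
      real (card (famF_nm eps n m)) \<le> C * 2 powr (2 * subset_count_exponent eps * real n)"
    using card_famF_nm_le[OF \<open>eps > 0\<close>] by (intro exI[of _ 4]) auto
qed

end
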